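(* Fix $\ell\geq2$, let $A=\ell\times\omega$, and fix a recursive bijection $\psi:(\ell-1)\times\omega\times\omega\to\omega$. For $\alpha\in\{0,1\}^\omega$ define the binary relation $S_\alpha$ on $A$ by: $S_\alpha(a,b)$ holds iff $a=(i,n)$, $b=(i+1,m)$ for some $i<\ell-1$, $n,m\in\omega$ with $\alpha_{\psi(i,n,m)}=1$. Let $G$ be the set of $\alpha\in\{0,1\}^\omega$ such that $\langle A,S_\alpha,\{0\}\times\omega,\ldots,\{\ell-1\}\times\omega\rangle$ (interpreting $L_j$ as $\{j\}\times\omega$ and $S$ as $S_\alpha$) is a model of the theory $T_\ell$. Then $G$ is a $\Pi^0_2$ subset of $\{0,1\}^\omega$.
   Context: The signature has unary relations $L_0,\ldots,L_{\ell-1}$ and a binary relation $S$. The theory $T_\ell$ consists of: (i) every $x$ satisfies some $L_j(x)$; (ii) no $x$ satisfies $L_i(x)\wedge L_j(x)$ for $i<j$; (iii) $S(x,y)$ and $L_i(x)$ with $i\le \ell-2$ imply $L_{i+1}(y)$; (iv) extension axioms: for each $i<\ell$ and all finite sets $X,Y\subseteq L_{i+1}$ with $X\cap Y=\emptyset$, $Z\subseteq L_i$, and $X',Y'\subseteq L_{i-1}$ with $X'\cap Y'=\emptyset$ (where $L_{-1}$ and $L_\ell$ are read as the empty set), there is $z\in L_i\setminus Z$ with $S(z,x)$ for all $x\in X$, $S(x',z)$ for all $x'\in X'$, $\neg S(z,y)$ for all $y\in Y$ and $\neg S(y',z)$ for all $y'\in Y'$ (one first-order axiom for each $i$ and each tuple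 of cardinalities $(|X|,|Y|,|Z|,|X'|,|Y'|)$). $\Pi^0_2$ refers to the arithmetical hierarchy on subsets of Cantor space $\{0,1\}^\omega$. *)

theory Defs
  imports Main
begin

datatype recf = Z | Sc | Pj nat | Cn recf "recf list" | Pr recf recf | Mn recf

inductive eval :: "recf \<Rightarrow> nat list \<Rightarrow> nat \<Rightarrow> bool"
  and evals :: "recf list \<Rightarrow> nat list \<Rightarrow> nat list \<Rightarrow> bool" where
  eval_Z: "eval Z xs 0"
| eval_Sc: "eval Sc (x # xs) (Suc x)"
| eval_Pj: "i < length xs \<Longrightarrow> eval (Pj i) xs (xs ! i)"
| eval_Cn: "evals gs xs ys \<Longrightarrow> eval f ys z \<Longrightarrow> eval (Cn f gs) xs z"
| eval_Pr0: "eval f xs z \<Longrightarrow> eval (Pr f g) (0 # xs) z"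
| eval_PrS: "eval (Pr f g) (n # xs) y \<Longrightarrow> eval g (n # y # xs) z
              \<Longrightarrow> eval (Pr f g) (Suc n # xs) z"
| eval_Mn: "eval f (n # xs) 0 \<Longrightarrow> (\<forall>k<n. \<exists>y. eval f (k # xs) (Suc y))
              \<Longrightarrow> eval (Mn f) xs n"
| evals_Nil: "evals [] xs []"
| evals_Cons: "eval g xs y \<Longrightarrow> evals gs xs ys \<Longrightarrow> evals (g # gs) xs (y # ys)"

definition recursive_fn :: "nat \<Rightarrow> (nat list \<Rightarrow> nat) \<Rightarrow> bool" where
  "recursive_fn k f \<longleftrightarrow> (\<exists>t. \<forall>xs. length xs = k \<longrightarrow> eval t xs (f xs))"

definition recursive_rel :: "nat \<Rightarrow> (nat list \<Rightarrow> bool) \<Rightarrow> bool" where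
  "recursive_rel k R \<longleftrightarrow> recursive_fn k (\<lambda>xs. if R xs then 1 else 0)"

definition prefix_code :: "(nat \<Rightarrow> bool) \<Rightarrow> nat \<Rightarrow> nat" where
  "prefix_code \<alpha> m = (\<Sum>i<m. if \<alpha> i then 2 ^ i else 0)"

definition Pi02 :: "(nat \<Rightarrow> bool) set \<Rightarrow> bool" where
  "Pi02 G \<longleftrightarrow> (\<exists>R. recursive_rel 3 R \<and>
     (\<forall>\<alpha>. \<alpha> \<in> G \<longleftrightarrow> (\<forall>n. \<exists>m. R [n, m, prefix_code \<alpha> m])))"

definition lev :: "nat \<Rightarrow> 'a set \<Rightarrow> (nat \<Rightarrow> 'a set) \<Rightarrow> int \<Rightarrow> 'a set" where
  "lev l D L k = (if 0 \<le> k \<and> k < int l then L (nat k) \<inter> D else {})"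

definition T_model :: "nat \<Rightarrow> 'a set \<Rightarrow> (nat \<Rightarrow> 'a set) \<Rightarrow> ('a \<Rightarrow> 'a \<Rightarrow> bool) \<Rightarrow> bool" where
  "T_model l D L S \<longleftrightarrow>
     (\<forall>x\<in>D. \<exists>j<l. x \<in> L j) \<and>
     (\<forall>x\<in>D. \<forall>i j. i < j \<and> j < l \<longrightarrow> \<not> (x \<in> L i \<and> x \<in> L j)) \<and>
     (\<forall>x\<in>D. \<forall>y\<in>D. \<forall>i. i + 2 \<le> l \<and> S x y \<and> x \<in> L i \<longrightarrow> y \<in> L (i + 1)) \<and>
     (\<forall>i::int. 0 \<le> i \<and> i < int l \<longrightarrow>
       (\<forall>X Y Z X' Y'.
          finite X \<and> finite Y \<and> finite Z \<and> finite X' \<and> finite Y' \<and>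
          X \<subseteq> lev l D L (i + 1) \<and> Y \<subseteq> lev l D L (i + 1) \<and> X \<inter> Y = {} \<and>
          Z \<subseteq> lev l D L i \<and>
          X' \<subseteq> lev l D L (i - 1) \<and> Y' \<subseteq> lev l D L (i - 1) \<and> X' \<inter> Y' = {} \<longrightarrow>
          (\<exists>z \<in> lev l D L i - Z.
             (\<forall>x\<in>X. S z x) \<and> (\<forall>x'\<in>X'. S x' z) \<and>
             (\<forall>y\<in>Y. \<not> S z y) \<and> (\<forall>y'\<in>Y'. \<not> S y' z))))"

definition S_alpha :: "nat \<Rightarrow> (nat \<Rightarrow> nat \<Rightarrow> nat \<Rightarrow> nat) \<Rightarrow> (nat \<Rightarrow> bool)
                        \<Rightarrow> nat \<times> nat \<Rightarrow> nat \<times> nat \<Rightarrow> bool" where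
  "S_alpha l \<psi> \<alpha> a b \<longleftrightarrow>
     (\<exists>i n m. i + 1 < l \<and> a = (i, n) \<and> b = (i + 1, m) \<and> \<alpha> (\<psi> i n m))"

end

theory Submission
  imports Defs
begin

text \<open>
  Membership of \<alpha> in G reduces to the extension axioms. An instance at level i matters only
  through a bound N and the traces below N of X on level i+1 and of X' on level i-1; coding these
  as bitmasks p, p', it asks for a column k \<ge> N whose bits \<alpha>(\<psi>(i,k,j)) and \<alpha>(\<psi>(i-1,j,k)),
  j < N, follow the masks. Such a witness, once visible in a prefix of \<alpha>, stays visible in all
  longer prefixes, so finitely many instances are settled by one common prefix. This yields the
  form \<forall>n \<exists>m with a matrix built from bounded quantifiers, +, *, 2^x and bit tests.
\<close>

section \<open>Closure properties of recursive functions and relations\<close>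

lemma recursive_fn_cong:
  "recursive_fn k f \<Longrightarrow> (\<And>xs. length xs = k \<Longrightarrow> f xs = g xs) \<Longrightarrow> recursive_fn k g"
  unfolding recursive_fn_def by auto

lemma recursive_rel_cong:
  "recursive_rel k P \<Longrightarrow> (\<And>xs. length xs = k \<Longrightarrow> P xs \<longleftrightarrow> Q xs) \<Longrightarrow> recursive_rel k Q"
  unfolding recursive_rel_def by (erule recursive_fn_cong) simp

lemma recursive_fn_const: "recursive_fn k (\<lambda>xs. c)"
proof -
  have "eval (((\<lambda>t. Cn Sc [t]) ^^ c) Z) xs c" for xs
    by (induction c) (auto intro: eval_evals.intros)
  then show ?thesis
    unfolding recursive_fn_def by blast
qed

lemma recursive_fn_nth: "i < k \<Longrightarrow> recursive_fn k (\<lambda>xs. xs ! i)"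
  unfolding recursive_fn_def by (auto intro: eval_Pj)

lemma recursive_fn_comp:
  assumes "recursive_fn (length gs) f" and "\<And>g. g \<in> set gs \<Longrightarrow> recursive_fn k g"
  shows "recursive_fn k (\<lambda>xs. f (map (\<lambda>g. g xs) gs))"
proof -
  have "\<exists>ts. \<forall>xs. length xs = k \<longrightarrow> evals ts xs (map (\<lambda>g. g xs) gs)"
    using assms(2)
  proof (induction gs)
    case Nil
    show ?case by (auto intro: evals_Nil)
  next
    case (Cons g gs)
    then obtain ts where "\<forall>xs. length xs = k \<longrightarrow> evals ts xs (map (\<lambda>g. g xs) gs)"
      by auto
    moreover obtain t where "\<forall>xs. length xs = k \<longrightarrow> eval t xs (g xs)"
      using Cons.prems unfolding recursive_fn_def by auto
    ultimately show ?case
      by (auto intro!: exI[of _ "t # ts"] evals_Cons)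
  qed
  then obtain ts where "\<forall>xs. length xs = k \<longrightarrow> evals ts xs (map (\<lambda>g. g xs) gs)"
    by blast
  moreover obtain t where "\<forall>ys. length ys = length gs \<longrightarrow> eval t ys (f ys)"
    using assms(1) unfolding recursive_fn_def by blast
  ultimately show ?thesis
    unfolding recursive_fn_def by (auto intro!: exI[of _ "Cn t ts"] eval_Cn)
qed

lemma recursive_fn_comp1:
  "recursive_fn 1 h \<Longrightarrow> recursive_fn k f \<Longrightarrow> recursive_fn k (\<lambda>xs. h [f xs])"
  using recursive_fn_comp[of "[f]" h k] by simp

lemma recursive_fn_comp2:
  "recursive_fn 2 h \<Longrightarrow> recursive_fn k f \<Longrightarrow> recursive_fn k g \<Longrightarrow>
   recursive_fn k (\<lambda>xs. h [f xs, g xs])"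
  by (rule recursive_fn_comp[of "[f, g]", simplified]) (auto simp: numeral_2_eq_2)

lemma recursive_fn_comp3:
  "recursive_fn 3 h \<Longrightarrow> recursive_fn k f \<Longrightarrow> recursive_fn k g \<Longrightarrow> recursive_fn k e \<Longrightarrow>
   recursive_fn k (\<lambda>xs. h [f xs, g xs, e xs])"
  by (rule recursive_fn_comp[of "[f, g, e]", simplified]) (auto simp: numeral_3_eq_3)

lemma recursive_fn_comp_nths:
  "recursive_fn (length is) f \<Longrightarrow> \<forall>i\<in>set is. i < k \<Longrightarrow>
   recursive_fn k (\<lambda>xs. f (map ((!) xs) is))"
  using recursive_fn_comp[of "map (\<lambda>i xs. xs ! i) is" f k]
  by (auto intro: recursive_fn_nth simp: comp_def)

lemma recursive_fn_comp_Cons: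
  assumes "recursive_fn (Suc k) h" and "recursive_fn k f"
  shows "recursive_fn k (\<lambda>xs. h (f xs # xs))"
proof -
  have "recursive_fn k (\<lambda>xs. h (map (\<lambda>g. g xs) (f # map (\<lambda>i xs. xs ! i) [0..<k])))"
    using assms by (intro recursive_fn_comp) (auto intro: recursive_fn_nth)
  then show ?thesis
    by (rule recursive_fn_cong) (simp add: comp_def, metis map_nth)
qed

lemma recursive_fn_Suc:
  assumes "recursive_fn k f"
  shows "recursive_fn k (\<lambda>xs. Suc (f xs))"
proof -
  have "recursive_fn 1 (\<lambda>xs. Suc (xs ! 0))"
    unfolding recursive_fn_def by (auto intro!: exI[of _ Sc] simp: length_Suc_conv eval_Sc)
  from recursive_fn_comp1[OF this assms] show ?thesis
    by simp
qed

lemma recursive_fn_prim_rec: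
  assumes "recursive_fn k f" and "recursive_fn (Suc (Suc k)) g"
    and "\<And>xs. length xs = k \<Longrightarrow> h (0 # xs) = f xs"
    and "\<And>n xs. length xs = k \<Longrightarrow> h (Suc n # xs) = g (n # h (n # xs) # xs)"
  shows "recursive_fn (Suc k) h"
proof -
  obtain tf tg where tf: "\<forall>xs. length xs = k \<longrightarrow> eval tf xs (f xs)"
    and tg: "\<forall>zs. length zs = Suc (Suc k) \<longrightarrow> eval tg zs (g zs)"
    using assms(1,2) unfolding recursive_fn_def by blast
  have "eval (Pr tf tg) (n # xs) (h (n # xs))" if "length xs = k" for n xs
    using that by (induction n) (auto intro: eval_Pr0 eval_PrS simp: tf tg assms(3,4))
  then show ?thesis
    unfolding recursive_fn_def by (metis length_Suc_conv)
qed

lemma recursive_fn_add: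
  assumes "recursive_fn k f" and "recursive_fn k g"
  shows "recursive_fn k (\<lambda>xs. f xs + g xs)"
proof -
  have "recursive_fn 2 (\<lambda>xs. xs ! 0 + xs ! 1)"
    unfolding numeral_2_eq_2
    by (rule recursive_fn_prim_rec[where f = "\<lambda>xs. xs ! 0" and g = "\<lambda>zs. Suc (zs ! 1)"])
      (auto intro: recursive_fn_nth recursive_fn_Suc)
  from recursive_fn_comp2[OF this assms] show ?thesis
    by simp
qed

lemma recursive_fn_mult:
  assumes "recursive_fn k f" and "recursive_fn k g"
  shows "recursive_fn k (\<lambda>xs. f xs * g xs)"
proof -
  have "recursive_fn 2 (\<lambda>xs. xs ! 0 * xs ! 1)"
    unfolding numeral_2_eq_2
    by (rule recursive_fn_prim_rec[where f = "\<lambda>xs. 0" and g = "\<lambda>zs. zs ! 2 + zs ! 1"])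
      (auto intro!: recursive_fn_nth recursive_fn_const recursive_fn_add)
  from recursive_fn_comp2[OF this assms] show ?thesis
    by simp
qed

lemma recursive_fn_diff:
  assumes "recursive_fn k f" and "recursive_fn k g"
  shows "recursive_fn k (\<lambda>xs. f xs - g xs)"
proof -
  have "recursive_fn 1 (\<lambda>xs. xs ! 0 - 1)"
    unfolding One_nat_def
    by (rule recursive_fn_prim_rec[where f = "\<lambda>xs. 0" and g = "\<lambda>zs. zs ! 0"])
      (auto intro!: recursive_fn_nth recursive_fn_const)
  from recursive_fn_comp1[OF this recursive_fn_nth[of 1 "Suc (Suc (Suc 0))"]]
  have pred: "recursive_fn (Suc (Suc (Suc 0))) (\<lambda>zs. zs ! 1 - 1)"
    by simp
  have "recursive_fn 2 (\<lambda>xs. xs ! 1 - xs ! 0)"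
    unfolding numeral_2_eq_2
    by (rule recursive_fn_prim_rec[OF recursive_fn_nth pred]) auto
  from recursive_fn_comp2[OF this assms(2,1)] show ?thesis
    by simp
qed

lemma recursive_fn_power2:
  assumes "recursive_fn k f"
  shows "recursive_fn k (\<lambda>xs. 2 ^ f xs)"
proof -
  have "recursive_fn 1 (\<lambda>xs. 2 ^ (xs ! 0))"
    unfolding One_nat_def
    by (rule recursive_fn_prim_rec[where f = "\<lambda>xs. 1" and g = "\<lambda>zs. zs ! 1 + zs ! 1"])
      (auto intro!: recursive_fn_nth recursive_fn_const recursive_fn_add)
  from recursive_fn_comp1[OF this assms] show ?thesis
    by simp
qed

lemma recursive_rel_eq_0:
  assumes "recursive_fn k f"
  shows "recursive_rel k (\<lambda>xs. f xs = 0)"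
  unfolding recursive_rel_def
  by (rule recursive_fn_cong[OF recursive_fn_diff[OF recursive_fn_const assms, of 1]]) simp

lemma recursive_rel_not:
  assumes "recursive_rel k P"
  shows "recursive_rel k (\<lambda>xs. \<not> P xs)"
  using recursive_rel_eq_0[OF assms[unfolded recursive_rel_def]]
  by (rule recursive_rel_cong) simp

lemma recursive_rel_conj:
  assumes "recursive_rel k P" and "recursive_rel k Q"
  shows "recursive_rel k (\<lambda>xs. P xs \<and> Q xs)"
  using recursive_fn_mult[OF assms[unfolded recursive_rel_def]]
  unfolding recursive_rel_def by (rule recursive_fn_cong) simp

lemma recursive_rel_imp:
  assumes "recursive_rel k P" and "recursive_rel k Q"
  shows "recursive_rel k (\<lambda>xs. P xs \<longrightarrow> Q xs)"
  using recursive_rel_not[OF recursive_rel_conj[OF assms(1) recursive_rel_not[OF assms(2)]]]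
  by (rule recursive_rel_cong) simp

lemma recursive_rel_eq:
  assumes "recursive_fn k f" and "recursive_fn k g"
  shows "recursive_rel k (\<lambda>xs. f xs = g xs)"
  using recursive_rel_eq_0[OF recursive_fn_add[OF recursive_fn_diff[OF assms] recursive_fn_diff[OF assms(2,1)]]]
  by (rule recursive_rel_cong) auto

lemma recursive_rel_iff:
  assumes "recursive_rel k P" and "recursive_rel k Q"
  shows "recursive_rel k (\<lambda>xs. P xs \<longleftrightarrow> Q xs)"
  using recursive_rel_eq[OF assms[unfolded recursive_rel_def]]
  by (rule recursive_rel_cong) simp

lemma recursive_rel_le:
  assumes "recursive_fn k f" and "recursive_fn k g"
  shows "recursive_rel k (\<lambda>xs. f xs \<le> g xs)"
  using recursive_rel_eq_0[OF recursive_fn_diff[OF assms]]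
  by (rule recursive_rel_cong) simp

lemma recursive_rel_less:
  assumes "recursive_fn k f" and "recursive_fn k g"
  shows "recursive_rel k (\<lambda>xs. f xs < g xs)"
  using recursive_rel_le[OF recursive_fn_Suc[OF assms(1)] assms(2)]
  by (rule recursive_rel_cong) (simp add: Suc_le_eq)

(* The bound variable is appended to the argument list, so nested bounded quantifiers never
   shift the positions of outer variables; simp turns the nested take-terms arising from them
   back into plain projections. *)
lemma recursive_rel_all_less:
  assumes Q: "recursive_rel (Suc k) (\<lambda>ys. Q (ys ! k) (take k ys))" and B: "recursive_fn k B"
  shows "recursive_rel k (\<lambda>xs. \<forall>y<B xs. Q y xs)"
proof -
  let ?\<chi> = "\<lambda>ys. if Q (ys ! k) (take k ys) then 1 else 0 :: nat"
  define h where "h zs = (if \<forall>y<hd zs. Q y (tl zs) then 1 else 0 :: nat)" for zs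
  let ?args = "map (Suc \<circ> Suc) [0..<k] @ [0]"
  have step: "recursive_fn (Suc (Suc k)) (\<lambda>zs. zs ! 1 * ?\<chi> (map ((!) zs) ?args))"
    using Q unfolding recursive_rel_def
    by (intro recursive_fn_mult recursive_fn_nth recursive_fn_comp_nths) auto
  have "recursive_fn (Suc k) h"
  proof (rule recursive_fn_prim_rec[OF recursive_fn_const step])
    fix n and xs :: "nat list"
    assume xs: "length xs = k"
    show "h (0 # xs) = 1"
      by (simp add: h_def)
    have "map ((!) (n # h (n # xs) # xs)) ?args = xs @ [n]"
      using xs by (intro nth_equalityI) (auto simp: nth_append)
    then show "h (Suc n # xs) = (n # h (n # xs) # xs) ! 1 * ?\<chi> (map ((!) (n # h (n # xs) # xs)) ?args)"
      using xs by (auto simp: h_def less_Suc_eq)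
  qed
  from recursive_fn_comp_Cons[OF this B] show ?thesis
    unfolding recursive_rel_def h_def by simp
qed

lemma recursive_rel_ex_less:
  assumes "recursive_rel (Suc k) (\<lambda>ys. Q (ys ! k) (take k ys))" and "recursive_fn k B"
  shows "recursive_rel k (\<lambda>xs. \<exists>y<B xs. Q y xs)"
  using recursive_rel_not[OF recursive_rel_all_less[OF recursive_rel_not[OF assms(1)] assms(2)]]
  by (rule recursive_rel_cong) simp

lemma bit_nat_iff_decomposition:
  "bit (c::nat) x \<longleftrightarrow> (\<exists>a<2 ^ x. \<exists>b<Suc c. c = a + 2 ^ x * (2 * b + 1))"
proof
  assume "bit c x"
  then have "odd (c div 2 ^ x)"
    by (simp add: bit_iff_odd)
  then have "c = c mod 2 ^ x + 2 ^ x * (2 * (c div 2 ^ x div 2) + 1)"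
    by (metis div_mult_mod_eq mult.commute add.commute odd_two_times_div_two_succ)
  moreover have "c div 2 ^ x div 2 < Suc c"
    by (metis div_le_dividend le_imp_less_Suc order.trans)
  ultimately show "\<exists>a<2 ^ x. \<exists>b<Suc c. c = a + 2 ^ x * (2 * b + 1)"
    by (meson mod_less_divisor zero_less_numeral zero_less_power)
next
  assume "\<exists>a<2 ^ x. \<exists>b<Suc c. c = a + 2 ^ x * (2 * b + 1)"
  then obtain a b where "a < 2 ^ x" and "c = a + 2 ^ x * (2 * b + 1)"
    by blast
  then have "c div 2 ^ x = 2 * b + 1"
    using div_mult_self2[of "2 ^ x" a "2 * b + 1"] by simp
  then show "bit c x"
    by (simp add: bit_iff_odd)
qed

lemma recursive_rel_bit:
  assumes "recursive_fn k f" and "recursive_fn k g"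
  shows "recursive_rel k (\<lambda>xs. bit (f xs) (g xs))"
proof -
  have "recursive_rel 2 (\<lambda>xs. \<exists>a<2 ^ (xs ! 1). \<exists>b<Suc (xs ! 0). xs ! 0 = a + 2 ^ (xs ! 1) * (2 * b + 1))"
    by (intro recursive_rel_ex_less recursive_rel_eq recursive_fn_add recursive_fn_mult
        recursive_fn_power2 recursive_fn_Suc recursive_fn_const recursive_fn_nth)
      (simp_all add: recursive_fn_nth)
  then have "recursive_rel 2 (\<lambda>xs. bit (xs ! 0) (xs ! 1))"
    by (rule recursive_rel_cong) (simp add: bit_nat_iff_decomposition)
  from recursive_fn_comp2[OF this[unfolded recursive_rel_def] assms] show ?thesis
    unfolding recursive_rel_def by simp
qed

section \<open>The extension axioms on the universe {..<l} \<times> \<nat>\<close>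

definition extension_axiom :: "nat \<Rightarrow> 'a set \<Rightarrow> (nat \<Rightarrow> 'a set) \<Rightarrow> ('a \<Rightarrow> 'a \<Rightarrow> bool) \<Rightarrow> int \<Rightarrow> bool" where
  "extension_axiom l D L S i \<longleftrightarrow>
     (\<forall>X Y Z X' Y'.
        finite X \<and> finite Y \<and> finite Z \<and> finite X' \<and> finite Y' \<and>
        X \<subseteq> lev l D L (i + 1) \<and> Y \<subseteq> lev l D L (i + 1) \<and> X \<inter> Y = {} \<and>
        Z \<subseteq> lev l D L i \<and>
        X' \<subseteq> lev l D L (i - 1) \<and> Y' \<subseteq> lev l D L (i - 1) \<and> X' \<inter> Y' = {} \<longrightarrow>
        (\<exists>z \<in> lev l D L i - Z.
           (\<forall>x\<in>X. S z x) \<and> (\<forall>x'\<in>X'. S x' z) \<and>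
           (\<forall>y\<in>Y. \<not> S z y) \<and> (\<forall>y'\<in>Y'. \<not> S y' z)))"

abbreviation standard_universe :: "nat \<Rightarrow> (nat \<times> nat) set" where
  "standard_universe l \<equiv> {..<l} \<times> UNIV"

abbreviation standard_levels :: "nat \<Rightarrow> (nat \<times> nat) set" where
  "standard_levels j \<equiv> {j} \<times> UNIV"

lemma lev_standard_universe:
  assumes "i < l"
  shows "lev l (standard_universe l) standard_levels (int i) = {i} \<times> UNIV"
    and "lev l (standard_universe l) standard_levels (int i + 1) = (if Suc i < l then {Suc i} \<times> UNIV else {})"
    and "lev l (standard_universe l) standard_levels (int i - 1) = (if 0 < i then {i - 1} \<times> UNIV else {})"
  using assms by (auto simp: lev_def nat_diff_distrib)

lemma T_model_standard_iff:
  assumes "\<And>a b c d. S (a, b) (c, d) \<Longrightarrow> c = Suc a"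
  shows "T_model l (standard_universe l) standard_levels S \<longleftrightarrow>
    (\<forall>i<l. extension_axiom l (standard_universe l) standard_levels S (int i))"
proof -
  have cover: "\<forall>x\<in>standard_universe l. \<exists>j<l. x \<in> standard_levels j"
    by auto
  have disjoint: "\<forall>x\<in>standard_universe l. \<forall>i j. i < j \<and> j < l \<longrightarrow>
      \<not> (x \<in> standard_levels i \<and> x \<in> standard_levels j)"
    by auto
  have levels: "\<forall>x\<in>standard_universe l. \<forall>y\<in>standard_universe l. \<forall>i.
      i + 2 \<le> l \<and> S x y \<and> x \<in> standard_levels i \<longrightarrow> y \<in> standard_levels (i + 1)"
    using assms by fastforce
  have "T_model l (standard_universe l) standard_levels S \<longleftrightarrow>
      (\<forall>i::int. 0 \<le> i \<and> i < int l \<longrightarrow> extension_axiom l (standard_universe l) standard_levels S i)"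
    unfolding T_model_def extension_axiom_def[symmetric] using cover disjoint levels by blast
  also have "\<dots> \<longleftrightarrow> (\<forall>i<l. extension_axiom l (standard_universe l) standard_levels S (int i))"
    by (metis nat_eq_iff2 nat_less_iff of_nat_0_le_iff)
  finally show ?thesis .
qed

(* (i, k) realises the instance at level i with X = {i+1} \<times> (P \<inter> {..<N}),
   Y = {i+1} \<times> ({..<N} - P), X' and Y' formed likewise from P' on level i-1,
   and Z = {i} \<times> {..<N}. *)
definition extension_witness ::
  "nat \<Rightarrow> (nat \<times> nat \<Rightarrow> nat \<times> nat \<Rightarrow> bool) \<Rightarrow> nat \<Rightarrow> nat \<Rightarrow> nat set \<Rightarrow> nat set \<Rightarrow> nat \<Rightarrow> bool" where
  "extension_witness l S i N P P' k \<longleftrightarrow> N \<le> k \<and>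
     (\<forall>j<N. (Suc i < l \<longrightarrow> (S (i, k) (Suc i, j) \<longleftrightarrow> j \<in> P)) \<and>
            (0 < i \<longrightarrow> (S (i - 1, j) (i, k) \<longleftrightarrow> j \<in> P')))"

lemma extension_witness_of_extension_axiom:
  assumes "i < l" and ext: "extension_axiom l (standard_universe l) standard_levels S (int i)"
  shows "\<exists>k. extension_witness l S i N P P' k"
proof -
  let ?lev = "lev l (standard_universe l) standard_levels"
  define up where "up Q = {x \<in> ?lev (int i + 1). snd x \<in> Q \<inter> {..<N}}" for Q
  define down where "down Q = {x \<in> ?lev (int i - 1). snd x \<in> Q \<inter> {..<N}}" for Q
  have "up Q \<subseteq> {Suc i} \<times> {..<N}" "down Q \<subseteq> {i - 1} \<times> {..<N}" for Q
    unfolding up_def down_def using lev_standard_universe[OF \<open>i < l\<close>] by auto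
  then have "finite (up Q)" "finite (down Q)" for Q
    by (meson finite_SigmaI finite_lessThan finite.emptyI finite_insert finite_subset)+
  moreover have "up Q \<subseteq> ?lev (int i + 1)" "down Q \<subseteq> ?lev (int i - 1)" for Q
    unfolding up_def down_def by auto
  moreover have "up P \<inter> up (- P) = {}" "down P' \<inter> down (- P') = {}"
    unfolding up_def down_def by auto
  moreover have "{i} \<times> {..<N} \<subseteq> ?lev (int i)"
    using lev_standard_universe[OF \<open>i < l\<close>] by auto
  ultimately obtain z where z: "z \<in> ?lev (int i) - {i} \<times> {..<N}"
    and "\<forall>x\<in>up P. S z x" "\<forall>x\<in>down P'. S x z" "\<forall>y\<in>up (- P). \<not> S z y" "\<forall>y\<in>down (- P'). \<not> S y z"
    using ext[unfolded extension_axiom_def, rule_format, of "up P" "up (- P)" "{i} \<times> {..<N}" "down P'" "down (- P')"]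
    by auto
  moreover obtain k where "z = (i, k)" and "N \<le> k"
    using z lev_standard_universe[OF \<open>i < l\<close>] by force
  ultimately have "extension_witness l S i N P P' k"
    using lev_standard_universe[OF \<open>i < l\<close>] unfolding extension_witness_def up_def down_def by auto
  then show ?thesis ..
qed

lemma pattern_on_row:
  assumes "X \<union> Y \<subseteq> {a} \<times> UNIV" and "X \<inter> Y = {}" and "\<forall>x\<in>X \<union> Y. snd x < N"
    and "\<forall>j<N. R (a, j) \<longleftrightarrow> j \<in> snd ` X"
  shows "(\<forall>x\<in>X. R x) \<and> (\<forall>y\<in>Y. \<not> R y)"
proof (intro conjI ballI)
  fix x assume "x \<in> X"
  with assms(1,3,4) show "R x"
    by force
next
  fix y assume "y \<in> Y"
  have "snd y \<notin> snd ` X"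
  proof
    assume "snd y \<in> snd ` X"
    then obtain x where "x \<in> X" and "snd x = snd y"
      by auto
    moreover have "x \<in> {a} \<times> UNIV" and "y \<in> {a} \<times> UNIV"
      using assms(1) \<open>x \<in> X\<close> \<open>y \<in> Y\<close> by blast+
    ultimately have "x = y"
      by (simp add: mem_Times_iff prod_eq_iff)
    with \<open>x \<in> X\<close> \<open>y \<in> Y\<close> assms(2) show False
      by blast
  qed
  with \<open>y \<in> Y\<close> assms(1,3,4) show "\<not> R y"
    by force
qed

lemma extension_axiom_of_extension_witness:
  assumes "i < l" and witness: "\<forall>N P P'. \<exists>k. extension_witness l S i N P P' k"
  shows "extension_axiom l (standard_universe l) standard_levels S (int i)"
  unfolding extension_axiom_def
proof (intro allI impI, elim conjE)
  let ?lev = "lev l (standard_universe l) standard_levels"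
  fix X Y Z X' Y' :: "(nat \<times> nat) set"
  assume "finite X" "finite Y" "finite Z" "finite X'" "finite Y'"
    and X: "X \<subseteq> ?lev (int i + 1)" and Y: "Y \<subseteq> ?lev (int i + 1)" and "X \<inter> Y = {}"
    and Z: "Z \<subseteq> ?lev (int i)"
    and X': "X' \<subseteq> ?lev (int i - 1)" and Y': "Y' \<subseteq> ?lev (int i - 1)" and "X' \<inter> Y' = {}"
  then have "finite (snd ` (X \<union> Y \<union> Z \<union> X' \<union> Y'))"
    by simp
  then obtain N where N: "\<forall>x\<in>X \<union> Y \<union> Z \<union> X' \<union> Y'. snd x < N"
    unfolding finite_nat_set_iff_bounded by auto
  obtain k where "extension_witness l S i N (snd ` X) (snd ` X') k"
    using witness by blast
  then have "N \<le> k"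
    and k_up: "Suc i < l \<Longrightarrow> \<forall>j<N. S (i, k) (Suc i, j) \<longleftrightarrow> j \<in> snd ` X"
    and k_down: "0 < i \<Longrightarrow> \<forall>j<N. S (i - 1, j) (i, k) \<longleftrightarrow> j \<in> snd ` X'"
    unfolding extension_witness_def by auto
  have "(\<forall>x\<in>X. S (i, k) x) \<and> (\<forall>y\<in>Y. \<not> S (i, k) y)"
  proof (cases "Suc i < l")
    case True
    with X Y N k_up \<open>X \<inter> Y = {}\<close> show ?thesis
      by (intro pattern_on_row[where a = "Suc i"]) (auto simp: lev_standard_universe[OF \<open>i < l\<close>])
  qed (use X Y lev_standard_universe[OF \<open>i < l\<close>] in auto)
  moreover have "(\<forall>x\<in>X'. S x (i, k)) \<and> (\<forall>y\<in>Y'. \<not> S y (i, k))"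
  proof (cases "0 < i")
    case True
    with X' Y' N k_down \<open>X' \<inter> Y' = {}\<close> show ?thesis
      by (intro pattern_on_row[where a = "i - 1"]) (auto simp: lev_standard_universe[OF \<open>i < l\<close>])
  qed (use X' Y' lev_standard_universe[OF \<open>i < l\<close>] in auto)
  moreover have "(i, k) \<notin> Z"
    using N \<open>N \<le> k\<close> by (metis UnI1 UnI2 not_le snd_conv)
  then have "(i, k) \<in> ?lev (int i) - Z"
    by (simp add: lev_standard_universe[OF \<open>i < l\<close>])
  ultimately show "\<exists>z\<in>?lev (int i) - Z. (\<forall>x\<in>X. S z x) \<and> (\<forall>x'\<in>X'. S x' z) \<and>
      (\<forall>y\<in>Y. \<not> S z y) \<and> (\<forall>y'\<in>Y'. \<not> S y' z)"
    by blast
qed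

lemma extension_axiom_iff_extension_witness:
  "i < l \<Longrightarrow> extension_axiom l (standard_universe l) standard_levels S (int i) \<longleftrightarrow>
    (\<forall>N P P'. \<exists>k. extension_witness l S i N P P' k)"
  using extension_witness_of_extension_axiom extension_axiom_of_extension_witness by blast

section \<open>Reading witnesses off finite prefixes\<close>

lemma prefix_code_eq_horner_sum: "prefix_code \<alpha> m = horner_sum of_bool 2 (map \<alpha> [0..<m])"
  unfolding prefix_code_def horner_sum_eq_sum by (rule sum.cong) auto

lemma bit_prefix_code_iff: "bit (prefix_code \<alpha> m) j \<longleftrightarrow> j < m \<and> \<alpha> j"
  by (auto simp: prefix_code_eq_horner_sum bit_horner_sum_bit_iff)

lemma extension_witness_cong:
  assumes "\<And>j. j < N \<Longrightarrow> j \<in> P \<longleftrightarrow> j \<in> Q" and "\<And>j. j < N \<Longrightarrow> j \<in> P' \<longleftrightarrow> j \<in> Q'"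
  shows "extension_witness l S i N P P' k \<longleftrightarrow> extension_witness l S i N Q Q' k"
  using assms unfolding extension_witness_def by auto

lemma all_patterns_iff_all_bitmasks:
  "(\<forall>N P P'. \<exists>k. extension_witness l S i N P P' k) \<longleftrightarrow>
   (\<forall>N (p::nat) (p'::nat). \<exists>k. extension_witness l S i N {j. bit p j} {j. bit p' j} k)"
proof (intro iffI allI)
  fix N P P'
  assume "\<forall>N (p::nat) (p'::nat). \<exists>k. extension_witness l S i N {j. bit p j} {j. bit p' j} k"
  from this[rule_format, of N "prefix_code (\<lambda>j. j \<in> P) N" "prefix_code (\<lambda>j. j \<in> P') N"]
  obtain k where
    "extension_witness l S i N {j. bit (prefix_code (\<lambda>j. j \<in> P) N) j} {j. bit (prefix_code (\<lambda>j. j \<in> P') N) j} k" ..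
  then show "\<exists>k. extension_witness l S i N P P' k"
    by (subst (asm) extension_witness_cong[where Q = P and Q' = P']) (auto simp: bit_prefix_code_iff)
qed blast

lemma extension_witness_S_alpha_iff:
  assumes "i < l"
  shows "extension_witness l (S_alpha l \<psi> \<alpha>) i N P P' k \<longleftrightarrow> N \<le> k \<and>
    (\<forall>j<N. (Suc i < l \<longrightarrow> (\<alpha> (\<psi> i k j) \<longleftrightarrow> j \<in> P)) \<and>
           (0 < i \<longrightarrow> (\<alpha> (\<psi> (i - 1) j k) \<longleftrightarrow> j \<in> P')))"
  using assms unfolding extension_witness_def S_alpha_def by auto

(* c stands for prefix_code \<alpha> m: the witness and all bits of \<alpha> it depends on lie below m. *)
definition bounded_extension_witness ::
  "nat \<Rightarrow> (nat \<Rightarrow> nat \<Rightarrow> nat \<Rightarrow> nat) \<Rightarrow> nat \<Rightarrow> nat \<Rightarrow> nat \<Rightarrow> nat \<Rightarrow> nat \<Rightarrow> nat \<Rightarrow> bool" where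
  "bounded_extension_witness l \<psi> i N p p' m c \<longleftrightarrow> (\<exists>k<m. N \<le> k \<and>
     (\<forall>j<N. (Suc i < l \<longrightarrow> \<psi> i k j < m \<and> (bit c (\<psi> i k j) \<longleftrightarrow> bit p j)) \<and>
            (0 < i \<longrightarrow> \<psi> (i - 1) j k < m \<and> (bit c (\<psi> (i - 1) j k) \<longleftrightarrow> bit p' j))))"

lemma bounded_extension_witness_prefix_code_mono:
  assumes "bounded_extension_witness l \<psi> i N p p' m (prefix_code \<alpha> m)" and "m \<le> m'"
  shows "bounded_extension_witness l \<psi> i N p p' m' (prefix_code \<alpha> m')"
proof -
  obtain k where "k < m" and "N \<le> k" and k: "\<forall>j<N.
      (Suc i < l \<longrightarrow> \<psi> i k j < m \<and> (\<alpha> (\<psi> i k j) \<longleftrightarrow> bit p j)) \<and>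
      (0 < i \<longrightarrow> \<psi> (i - 1) j k < m \<and> (\<alpha> (\<psi> (i - 1) j k) \<longleftrightarrow> bit p' j))"
    using assms(1) unfolding bounded_extension_witness_def bit_prefix_code_iff by auto
  with \<open>m \<le> m'\<close> show ?thesis
    unfolding bounded_extension_witness_def bit_prefix_code_iff
    by (intro exI[of _ k]) auto
qed

lemma ex_bounded_extension_witness_iff:
  assumes "i < l"
  shows "(\<exists>m. bounded_extension_witness l \<psi> i N p p' m (prefix_code \<alpha> m)) \<longleftrightarrow>
    (\<exists>k. extension_witness l (S_alpha l \<psi> \<alpha>) i N {j. bit p j} {j. bit p' j} k)"
proof
  assume "\<exists>m. bounded_extension_witness l \<psi> i N p p' m (prefix_code \<alpha> m)"
  then show "\<exists>k. extension_witness l (S_alpha l \<psi> \<alpha>) i N {j. bit p j} {j. bit p' j} k"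
    unfolding bounded_extension_witness_def extension_witness_S_alpha_iff[OF assms] bit_prefix_code_iff
    by blast
next
  assume "\<exists>k. extension_witness l (S_alpha l \<psi> \<alpha>) i N {j. bit p j} {j. bit p' j} k"
  then obtain k where k: "extension_witness l (S_alpha l \<psi> \<alpha>) i N {j. bit p j} {j. bit p' j} k" ..
  define m where "m = Suc (Max ({k} \<union> (\<lambda>j. \<psi> i k j) ` {..<N} \<union> (\<lambda>j. \<psi> (i - 1) j k) ` {..<N}))"
  have "k < m" and "\<And>j. j < N \<Longrightarrow> \<psi> i k j < m \<and> \<psi> (i - 1) j k < m"
    unfolding m_def by (auto simp: less_Suc_eq_le)
  with k have "bounded_extension_witness l \<psi> i N p p' m (prefix_code \<alpha> m)"
    unfolding bounded_extension_witness_def extension_witness_S_alpha_iff[OF assms] bit_prefix_code_iff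
    by (intro exI[of _ k]) auto
  then show "\<exists>m. bounded_extension_witness l \<psi> i N p p' m (prefix_code \<alpha> m)" ..
qed

definition extension_matrix :: "nat \<Rightarrow> (nat \<Rightarrow> nat \<Rightarrow> nat \<Rightarrow> nat) \<Rightarrow> nat \<Rightarrow> nat \<Rightarrow> nat \<Rightarrow> bool" where
  "extension_matrix l \<psi> n m c \<longleftrightarrow> (\<forall>i<l. \<forall>N<n. \<forall>p<n. \<forall>p'<n. bounded_extension_witness l \<psi> i N p p' m c)"

lemma all_ex_extension_matrix_iff:
  "(\<forall>n. \<exists>m. extension_matrix l \<psi> n m (prefix_code \<alpha> m)) \<longleftrightarrow>
   (\<forall>i<l. \<forall>N p p'. \<exists>m. bounded_extension_witness l \<psi> i N p p' m (prefix_code \<alpha> m))"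
proof (intro iffI allI impI)
  fix i N p p'
  assume "\<forall>n. \<exists>m. extension_matrix l \<psi> n m (prefix_code \<alpha> m)" and "i < l"
  moreover have "N < Suc (N + p + p')" "p < Suc (N + p + p')" "p' < Suc (N + p + p')"
    by simp_all
  ultimately show "\<exists>m. bounded_extension_witness l \<psi> i N p p' m (prefix_code \<alpha> m)"
    unfolding extension_matrix_def by blast
next
  fix n
  assume witnesses: "\<forall>i<l. \<forall>N p p'. \<exists>m. bounded_extension_witness l \<psi> i N p p' m (prefix_code \<alpha> m)"
  have "eventually (\<lambda>m. bounded_extension_witness l \<psi> i N p p' m (prefix_code \<alpha> m)) sequentially"
    if "i < l" for i N p p'
    using witnesses that bounded_extension_witness_prefix_code_mono unfolding eventually_sequentially by meson
  then have "eventually (\<lambda>m. \<forall>(i, N, p, p') \<in> {..<l} \<times> {..<n} \<times> {..<n} \<times> {..<n}.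
      bounded_extension_witness l \<psi> i N p p' m (prefix_code \<alpha> m)) sequentially"
    by (intro eventually_ball_finite) auto
  then show "\<exists>m. extension_matrix l \<psi> n m (prefix_code \<alpha> m)"
    unfolding extension_matrix_def eventually_sequentially by fastforce
qed

lemma recursive_rel_extension_matrix:
  assumes \<psi>: "recursive_fn 3 (\<lambda>xs. \<psi> (xs ! 0) (xs ! 1) (xs ! 2))"
  shows "recursive_rel 3 (\<lambda>xs. extension_matrix l \<psi> (xs ! 0) (xs ! 1) (xs ! 2))"
proof -
  have \<psi>_comp: "recursive_fn k (\<lambda>xs. \<psi> (f xs) (g xs) (h xs))"
    if "recursive_fn k f" "recursive_fn k g" "recursive_fn k h" for k f g h
    using recursive_fn_comp3[OF \<psi> that] by simp
  show ?thesis
    unfolding extension_matrix_def bounded_extension_witness_def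
    by (intro recursive_rel_all_less recursive_rel_ex_less recursive_rel_conj recursive_rel_imp
        recursive_rel_iff recursive_rel_le recursive_rel_less recursive_rel_bit \<psi>_comp
        recursive_fn_diff recursive_fn_Suc recursive_fn_const recursive_fn_nth)
      (simp_all add: recursive_fn_nth)
qed

lemma T_model_S_alpha_iff_extension_matrix:
  "T_model l ({..<l} \<times> UNIV) (\<lambda>j. {j} \<times> UNIV) (S_alpha l \<psi> \<alpha>) \<longleftrightarrow>
   (\<forall>n. \<exists>m. extension_matrix l \<psi> n m (prefix_code \<alpha> m))"
proof -
  have "\<And>a b c d. S_alpha l \<psi> \<alpha> (a, b) (c, d) \<Longrightarrow> c = Suc a"
    unfolding S_alpha_def by auto
  then have "T_model l ({..<l} \<times> UNIV) (\<lambda>j. {j} \<times> UNIV) (S_alpha l \<psi> \<alpha>) \<longleftrightarrow>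
      (\<forall>i<l. \<forall>N P P'. \<exists>k. extension_witness l (S_alpha l \<psi> \<alpha>) i N P P' k)"
    by (simp add: T_model_standard_iff extension_axiom_iff_extension_witness)
  also have "\<dots> \<longleftrightarrow> (\<forall>i<l. \<forall>N p p'. \<exists>m. bounded_extension_witness l \<psi> i N p p' m (prefix_code \<alpha> m))"
    by (simp add: all_patterns_iff_all_bitmasks ex_bounded_extension_witness_iff)
  also have "\<dots> \<longleftrightarrow> (\<forall>n. \<exists>m. extension_matrix l \<psi> n m (prefix_code \<alpha> m))"
    by (rule all_ex_extension_matrix_iff[symmetric])
  finally show ?thesis .
qed

theorem lemma2:
  fixes l :: nat and \<psi> :: "nat \<Rightarrow> nat \<Rightarrow> nat \<Rightarrow> nat"
  assumes "l \<ge> 2"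
    and "bij_betw (\<lambda>(i, n, m). \<psi> i n m) ({..<l - 1} \<times> UNIV \<times> UNIV) UNIV"
    and "recursive_fn 3 (\<lambda>xs. \<psi> (xs ! 0) (xs ! 1) (xs ! 2))"
  shows "Pi02 {\<alpha>. T_model l ({..<l} \<times> UNIV) (\<lambda>j. {j} \<times> UNIV) (S_alpha l \<psi> \<alpha>)}"
  unfolding Pi02_def
  using recursive_rel_extension_matrix[OF assms(3)] T_model_S_alpha_iff_extension_matrix
  by (intro exI[of _ "\<lambda>xs. extension_matrix l \<psi> (xs ! 0) (xs ! 1) (xs ! 2)"]) auto

end
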